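(* For every set $J\subset\mathbb{Z}^+$, every integer $s\geqslant1$ and every $0<p<1$, $h_J(s,p)\leqslant h_J^0(s,p)$, where \[ h_J^0(s,p)=\frac{(1-p)^s}{p^2}\left(\frac{p^2}{(1-p)^{s+1}}+\frac{p}{s}\frac{1}{(1-p)^s}-\sum_{k\in J}k\frac{(k+s-2)!}{(k-1)!\,s!}p^k\right). \]
   Context: $\mathbb{Z}^+$ is the set of positive integers. For $J\subset\mathbb{Z}^+$, $s\in\mathbb{Z}^+$, $0<p<1$: $h_J(s,p)=\frac{(1-p)^s}{p^2}\sum_{k\in\mathbb{Z}^+\setminus J}\frac{k^2}{(k+s)^2}\binom{k+s}{k}p^k$. *)

theory Defs
  imports "HOL-Analysis.Analysis"
begin

text \<open>Positive integers are modelled as naturals k with k \<ge> 1; a set J of positive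
integers is a nat set with J \<subseteq> {1..}. Infinite sums are unordered sums (infsum).\<close>

definition h_J :: "nat set \<Rightarrow> nat \<Rightarrow> real \<Rightarrow> real" where
  "h_J J s p = (1 - p) ^ s / p\<^sup>2 *
     (\<Sum>\<^sub>\<infinity>k\<in>{1..} - J. (real k)\<^sup>2 / (real (k + s))\<^sup>2 * real ((k + s) choose k) * p ^ k)"

definition h0_J :: "nat set \<Rightarrow> nat \<Rightarrow> real \<Rightarrow> real" where
  "h0_J J s p = (1 - p) ^ s / p\<^sup>2 *
     (p\<^sup>2 / (1 - p) ^ (s + 1) + p / real s * (1 / (1 - p) ^ s)
      - (\<Sum>\<^sub>\<infinity>k\<in>J. real k * fact (k + s - 2) / (fact (k - 1) * fact s) * p ^ k))"

end

theory Submission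
  imports Defs
begin

(* Write a_k and b_k for the summands of h_J and of the sum over J in h0_J. Then
   a_k = (k+s-1)/(k+s) b_k <= b_k, and b_(j+1) = (j+1)/s C(j+s-1, j) p^(j+1), so the negative
   binomial series and its index-weighted version give
   sum_(k>=1) b_k = p^2/(1-p)^(s+1) + p/(s (1-p)^s).
   Hence the sum of the a_k over k not in J is at most this total minus the sum of the b_k
   over k in J. *)

lemma negative_binomial_sums:
  fixes x :: real
  assumes "\<bar>x\<bar> < 1"
  shows "(\<lambda>j. real ((j + m) choose j) * x ^ j) sums (1 / (1 - x) ^ (m + 1))"
proof -
  have "\<bar>-x\<bar> < 1" using assms by simp
  from gen_binomial_real[OF this, of "- real (m + 1)"]
  have "(\<lambda>j. (- real (m + 1) gchoose j) * (- x) ^ j) sums (1 - x) powr (- real (m + 1))"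
    by simp
  moreover have "(- real (m + 1) gchoose j) * (- x) ^ j = real ((j + m) choose j) * x ^ j" for j
  proof -
    have "(- real (m + 1) gchoose j) = (-1) ^ j * ((real (m + 1) + real j - 1) gchoose j)"
      by (rule gbinomial_minus)
    also have "\<dots> = (-1) ^ j * real ((j + m) choose j)"
      by (simp add: binomial_gbinomial add.commute)
    finally show ?thesis by (simp add: power_mult_distrib[symmetric])
  qed
  moreover have "(1 - x) powr (- real (m + 1)) = 1 / (1 - x) ^ (m + 1)"
    using assms by (simp add: powr_minus_divide powr_realpow del: of_nat_Suc)
  ultimately show ?thesis by simp
qed

lemma index_times_negative_binomial_sums:
  fixes x :: real
  assumes "\<bar>x\<bar> < 1"
  shows "(\<lambda>j. real j * real ((j + m) choose j) * x ^ j) sums (real (m + 1) * x / (1 - x) ^ (m + 2))"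
proof -
  have "Suc i * ((Suc i + m) choose Suc i) = (m + 1) * ((i + Suc m) choose i)" for i
    using Suc_times_binomial_add[of i m] by simp
  then have "real (Suc i) * real ((Suc i + m) choose Suc i) = real (m + 1) * real ((i + Suc m) choose i)"
    for i
    by (simp only: of_nat_mult[symmetric])
  then have "(\<lambda>i. real (Suc i) * real ((Suc i + m) choose Suc i) * x ^ Suc i)
      = (\<lambda>i. real (m + 1) * x * (real ((i + Suc m) choose i) * x ^ i))"
    by (simp add: mult_ac)
  moreover have "(\<lambda>i. real (m + 1) * x * (real ((i + Suc m) choose i) * x ^ i))
      sums (real (m + 1) * x * (1 / (1 - x) ^ (Suc m + 1)))"
    by (rule sums_mult[OF negative_binomial_sums[OF assms]])
  ultimately have "(\<lambda>i. real (Suc i) * real ((Suc i + m) choose Suc i) * x ^ Suc i)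
      sums (real (m + 1) * x / (1 - x) ^ (m + 2))"
    by simp
  then show ?thesis
    by (subst (asm) sums_Suc_iff) simp
qed

definition h_J_summand :: "nat \<Rightarrow> real \<Rightarrow> nat \<Rightarrow> real" where
  "h_J_summand s p k = (real k)\<^sup>2 / (real (k + s))\<^sup>2 * real ((k + s) choose k) * p ^ k"

definition h0_J_summand :: "nat \<Rightarrow> real \<Rightarrow> nat \<Rightarrow> real" where
  "h0_J_summand s p k = real k * fact (k + s - 2) / (fact (k - 1) * fact s) * p ^ k"

lemma h_J_summand_nonneg: "0 \<le> p \<Longrightarrow> 0 \<le> h_J_summand s p k"
  by (simp add: h_J_summand_def)

lemma h0_J_summand_nonneg: "0 \<le> p \<Longrightarrow> 0 \<le> h0_J_summand s p k"
  by (simp add: h0_J_summand_def)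

lemma h0_J_summand_Suc:
  "h0_J_summand (Suc r) p (Suc j) = real (Suc j) / real (Suc r) * real ((j + r) choose j) * p ^ Suc j"
  by (simp add: h0_J_summand_def binomial_fact field_simps)

lemma real_choose_Suc_Suc_add:
  "real ((Suc j + Suc r) choose Suc j)
    = real (j + r + 2) * real (j + r + 1) / (real (Suc j) * real (Suc r)) * real ((j + r) choose j)"
proof -
  have "fact (Suc j + Suc r) = real (j + r + 2) * real (j + r + 1) * (fact (j + r) :: real)"
    by (simp add: algebra_simps)
  moreover have "fact (Suc j) * fact (Suc r) = real (Suc j) * real (Suc r) * (fact j * fact r :: real)"
    by (simp add: algebra_simps)
  moreover have "real ((Suc j + Suc r) choose Suc j) = fact (Suc j + Suc r) / (fact (Suc j) * fact (Suc r))"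
    "real ((j + r) choose j) = fact (j + r) / (fact j * fact r)"
    by (subst binomial_fact; simp del: fact_Suc)+
  ultimately show ?thesis
    by (simp del: fact_Suc of_nat_Suc)
qed

lemma h_J_summand_Suc:
  "h_J_summand (Suc r) p (Suc j) = real (j + r + 1) / real (j + r + 2) * h0_J_summand (Suc r) p (Suc j)"
proof -
  have cancel: "x\<^sup>2 / y\<^sup>2 * (y * z / (x * R) * c) * P = z / y * (x / R * c * P)"
    if "x \<noteq> 0" "y \<noteq> 0" for x y z R c P :: real
    using that by (simp add: field_simps power2_eq_square)
  have "real (Suc j + Suc r) = real (j + r + 2)" by simp
  then show ?thesis
    unfolding h_J_summand_def h0_J_summand_Suc real_choose_Suc_Suc_add
    by (simp only:) (rule cancel; simp)
qed

lemma h_J_summand_le_h0_J_summand: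
  assumes "0 \<le> p" "s \<ge> 1" "k \<ge> 1"
  shows "h_J_summand s p k \<le> h0_J_summand s p k"
proof -
  obtain r j where "s = Suc r" "k = Suc j" using assms(2,3) by (cases s; cases k) auto
  moreover have "real (j + r + 1) / real (j + r + 2) * h0_J_summand (Suc r) p (Suc j)
      \<le> 1 * h0_J_summand (Suc r) p (Suc j)"
    by (rule mult_right_mono) (simp_all add: h0_J_summand_nonneg assms(1))
  ultimately show ?thesis by (simp add: h_J_summand_Suc)
qed

lemma h0_J_summand_has_sum:
  assumes "0 \<le> p" "p < 1" "s \<ge> 1"
  shows "(h0_J_summand s p has_sum (p\<^sup>2 / (1 - p) ^ (s + 1) + p / real s * (1 / (1 - p) ^ s))) {1..}"
proof -
  obtain r where s: "s = Suc r" using assms(3) by (cases s) auto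
  have "\<bar>p\<bar> < 1" using assms by simp
  from sums_add[OF negative_binomial_sums[OF this, of r] index_times_negative_binomial_sums[OF this, of r]]
  have "(\<lambda>j. real (Suc j) * real ((j + r) choose j) * p ^ j)
      sums (1 / (1 - p) ^ (r + 1) + real (r + 1) * p / (1 - p) ^ (r + 2))"
    by (simp add: algebra_simps)
  from sums_mult[OF this, of "p / real (Suc r)"]
  have "(\<lambda>j. h0_J_summand s p (Suc j))
      sums (p / real (Suc r) * (1 / (1 - p) ^ (r + 1) + real (r + 1) * p / (1 - p) ^ (r + 2)))"
    unfolding s h0_J_summand_Suc by (simp add: mult_ac)
  also have "\<dots> = p\<^sup>2 / (1 - p) ^ (s + 1) + p / real s * (1 / (1 - p) ^ s)"
    using assms(2) by (simp add: s field_simps power2_eq_square del: of_nat_Suc)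
  finally have "(\<lambda>j. h0_J_summand s p (Suc j)) sums \<dots>" .
  then have "((h0_J_summand s p \<circ> Suc) has_sum \<dots>) UNIV"
    by (auto intro: sums_nonneg_imp_has_sum h0_J_summand_nonneg assms(1) simp: comp_def)
  moreover have "range Suc = {1..}"
    by (auto simp: image_iff dest: Suc_le_D)
  ultimately show ?thesis
    using has_sum_reindex[of Suc UNIV "h0_J_summand s p"] by simp
qed

lemma infsum_Diff_le_has_sum_minus_infsum:
  fixes f g :: "'a \<Rightarrow> real"
  assumes "(g has_sum G) A" "B \<subseteq> A"
    and "\<And>x. x \<in> A - B \<Longrightarrow> 0 \<le> f x" "\<And>x. x \<in> A - B \<Longrightarrow> f x \<le> g x"
  shows "infsum f (A - B) \<le> G - infsum g B"
proof -
  have g_B: "g summable_on B" and g_AB: "g summable_on (A - B)"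
    using summable_on_subset_banach[OF has_sum_imp_summable[OF assms(1)]] assms(2) by auto
  have "infsum f (A - B) \<le> infsum g (A - B)"
    using summable_on_comparison_test[OF g_AB] assms(3,4) g_AB by (intro infsum_mono) auto
  moreover have "(A - B) \<inter> B = {}" "(A - B) \<union> B = A" using assms(2) by auto
  then have "infsum g A = infsum g (A - B) + infsum g B"
    using infsum_Un_disjoint[OF g_AB g_B] by simp
  ultimately show ?thesis
    using infsumI[OF assms(1)] by simp
qed

theorem lemma3:
  fixes J :: "nat set" and s :: nat and p :: real
  assumes "J \<subseteq> {1..}" and "s \<ge> 1" and "0 < p" and "p < 1"
  shows "h_J J s p \<le> h0_J J s p"
proof -
  define T where "T = p\<^sup>2 / (1 - p) ^ (s + 1) + p / real s * (1 / (1 - p) ^ s)"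
  have "infsum (h_J_summand s p) ({1..} - J) \<le> T - infsum (h0_J_summand s p) J"
    unfolding T_def using assms
    by (intro infsum_Diff_le_has_sum_minus_infsum h0_J_summand_has_sum
        h_J_summand_nonneg h_J_summand_le_h0_J_summand) auto
  then have "(1 - p) ^ s / p\<^sup>2 * infsum (h_J_summand s p) ({1..} - J)
      \<le> (1 - p) ^ s / p\<^sup>2 * (T - infsum (h0_J_summand s p) J)"
    using assms by (intro mult_left_mono) auto
  then show ?thesis
    unfolding h_J_def h0_J_def T_def h_J_summand_def h0_J_summand_def by simp
qed

end
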